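(* For every integer $n\ge 3$, $M_n$ equals the largest odd integer that is less than or equal to $$12n - 2\sqrt{18n-12} - 6.$$ Equivalently: (i) every impossibly burnable $n$-path forest $(l_1,\dots,l_n)$ with $l_1\le l_2\le\cdots\le l_n$ satisfies $l_1\le 12n-2\sqrt{18n-12}-6$ and $l_1$ is at most the largest odd integer below this bound; and (ii) there exists an impossibly burnable $n$-path forest whose shortest path has order exactly the largest odd integer $\le 12n-2\sqrt{18n-12}-6$.
   Context: A path forest is a disjoint union of paths; an $n$-path forest is a path forest with exactly $n$ paths, represented by the tuple $(l_1,\dots,l_n)$ of the orders (numbers of vertices) of its paths, usually ordered so that $l_1\le l_2\le\cdots\le l_n$; $l_1$ is the order of its shortest path. All path forests considered have total order $\sum_i l_i=m^2$ for some positive integer $m$. For $m\in\mathbb{N}$ and an integer $1\le l\le m^2$, let $B_m(l)$ be the least positive integer $t$ with $t\equiv l \pmod 2$ such that $l\le \sum_{i=1}^t (2m-(2i-1)) = 2mt-t^2$. An $n$-path forest $(l_1,\dots,l_n)$ of order $m^2$ is called impossibly burnable if $\sum_{i=1}^n B_m(l_i)>m$. For $n\ge 2$, $M_n$ is the smallest positive integer such that every impossibly burnable $n$-path forest has shortest path of order at most $M_n$ (i.e. $M_n$ is the maximum of $l_1$ over all impossibly burnable $n$-path forests). *)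

theory Defs
  imports Complex_Main
begin

definition B :: "nat \<Rightarrow> nat \<Rightarrow> nat" where
  "B m l = (LEAST t::nat. 0 < t \<and> t mod 2 = l mod 2 \<and>
              int l \<le> 2 * int m * int t - (int t)^2)"

text \<open>An n-path forest is a list of path orders (each \<ge> 1), sorted ascending;
  it is impossibly burnable (w.r.t. total order m^2, m > 0) if the sum of B_m exceeds m.\<close>
definition path_forest :: "nat \<Rightarrow> nat list \<Rightarrow> bool" where
  "path_forest n ls \<longleftrightarrow> length ls = n \<and> sorted ls \<and> (\<forall>l\<in>set ls. 1 \<le> l)"

definition impossibly_burnable :: "nat \<Rightarrow> nat list \<Rightarrow> bool" where
  "impossibly_burnable m ls \<longleftrightarrow> 0 < m \<and> sum_list ls = m^2 \<and>
      sum_list (map (B m) ls) > m"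

definition M :: "nat \<Rightarrow> nat" where
  "M n = (LEAST b::nat. 0 < b \<and>
      (\<forall>m ls. path_forest n ls \<and> impossibly_burnable m ls \<longrightarrow> hd ls \<le> b))"

end

theory Submission
  imports Defs
begin

text \<open>
  A path of order \<open>l\<close> needs \<open>B\<^sub>m(l) \<equiv> l (mod 2)\<close> sources, so \<open>\<Sum> B\<^sub>m(l\<^sub>i)\<close> has the parity
  of \<open>m\<^sup>2\<close>, and an impossibly burnable forest has \<open>\<Sum> B\<^sub>m(l\<^sub>i) \<ge> m + 2\<close>. A path needing \<open>s\<close>
  sources has order at least \<open>\<mu>(s) = m\<^sup>2 + 2 - (m + 2 - s)\<^sup>2\<close>, two more than the order burnt
  by \<open>s - 2\<close> sources. With \<open>j\<close> the index such that \<open>\<mu>(j) \<le> l\<^sub>1 < \<mu>(j + 1)\<close>, the shortest path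
  needs at most \<open>j\<close> sources, so the \<open>n - 1\<close> longer ones carry an excess of about
  \<open>m + 2 - n j\<close> sources beyond \<open>j\<close>. Since the order forced by an excess grows concavely,
  the cheapest placement of this excess is one of four extreme configurations, which must
  fit into the total order \<open>m\<^sup>2\<close>. A case analysis on \<open>j\<close> (only \<open>j \<le> 3\<close> is possible, and
  \<open>j \<le> 2\<close> forces \<open>l\<^sub>1 < 9n - 10\<close>) gives some \<open>p \<ge> 1\<close> with \<open>l\<^sub>1 \<le> 12n - 6 - 3p - (6n - 4)/p\<close>,
  which by AM-GM is at most \<open>12n - 6 - 2 sqrt (18n - 12)\<close>.

  Conversely, for the largest odd \<open>k\<close> below this bound, \<open>D = 12n - 6 - k\<close> and
  \<open>p = \<lfloor>(D + 1)/6\<rfloor>\<close>, the forest of \<open>p - 1\<close> paths of order \<open>k\<close>, one path of a suitable odd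
  order \<open>L\<close> and \<open>n - p\<close> paths of order \<open>4m - 2\<close>, where \<open>m = 4n - 2 - p\<close>, has total order
  \<open>m\<^sup>2\<close> but needs \<open>3(p - 1) + 3 + 4(n - p) = m + 2\<close> sources.
\<close>

section \<open>Burning a single path\<close>

lemma burning_witness:
  assumes m: "0 < m" and l: "1 \<le> l" "l \<le> m^2"
  obtains t where "0 < t" "t \<le> m" "even t \<longleftrightarrow> even l"
    "int l \<le> 2 * int m * int t - (int t)^2"
proof (cases "even m \<longleftrightarrow> even l")
  case True
  have "int l \<le> int m ^ 2" using l(2) by (metis of_nat_le_iff of_nat_power)
  then have "int l \<le> 2 * int m * int m - (int m)^2" by (simp add: power2_eq_square)
  with True m show ?thesis by (intro that) auto
next
  case False
  have "l \<noteq> m^2" using False by auto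
  with l have "int l < int m ^ 2" by (metis le_neq_implies_less of_nat_less_iff of_nat_power)
  moreover have m2: "2 \<le> m" using False m l by (cases "m = 1") auto
  moreover have "even (m - 1) \<longleftrightarrow> even l" using False m2 by simp
  ultimately show ?thesis
    by (intro that[of "m - 1"]) (auto simp: of_nat_diff power2_eq_square algebra_simps)
qed

lemma B_spec:
  assumes "0 < m" and "1 \<le> l" and "l \<le> m^2"
  shows "0 < B m l" and "even (B m l) \<longleftrightarrow> even l"
    and "int l \<le> 2 * int m * int (B m l) - (int (B m l))^2" and "B m l \<le> m"
proof -
  obtain t where t: "0 < t" "t \<le> m" "even t \<longleftrightarrow> even l"
      "int l \<le> 2 * int m * int t - (int t)^2"
    using burning_witness[OF assms] .
  have mod2: "\<And>a b :: nat. a mod 2 = b mod 2 \<longleftrightarrow> (even a \<longleftrightarrow> even b)" by presburger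
  have "0 < B m l \<and> B m l mod 2 = l mod 2 \<and>
      int l \<le> 2 * int m * int (B m l) - (int (B m l))^2"
    unfolding B_def by (rule LeastI[of _ t]) (use t mod2 in auto)
  then show "0 < B m l" "even (B m l) \<longleftrightarrow> even l"
      "int l \<le> 2 * int m * int (B m l) - (int (B m l))^2"
    using mod2 by auto
  have "B m l \<le> t" unfolding B_def by (rule Least_le) (use t mod2 in auto)
  with t show "B m l \<le> m" by simp
qed

lemma B_minimal:
  assumes "t < B m l" and "0 < t" and "even t \<longleftrightarrow> even l"
  shows "2 * int m * int t - (int t)^2 < int l"
proof -
  have "t mod 2 = l mod 2" using assms(3) by presburger
  moreover have "\<not> (0 < t \<and> t mod 2 = l mod 2 \<and> int l \<le> 2 * int m * int t - (int t)^2)"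
    using assms(1) unfolding B_def by (rule not_less_Least)
  ultimately show ?thesis using assms(2) by auto
qed

lemma B_threshold_le:
  assumes m: "0 < m" and l: "1 \<le> l" "l \<le> m^2"
  shows "int m^2 + 2 - (int m + 2 - int (B m l))^2 \<le> int l"
proof -
  define s where "s = B m l"
  have s0: "0 < s" and sl: "even s \<longleftrightarrow> even l" using B_spec[OF assms] s_def by auto
  consider "s = 1" | "s = 2" | "3 \<le> s" using s0 by linarith
  then show ?thesis
  proof cases
    case 1
    then show ?thesis using m l s_def by (simp add: power2_eq_square algebra_simps)
  next
    case 2
    with sl l have "2 \<le> l" by (cases "l = 1") auto
    with 2 show ?thesis using s_def by (simp add: power2_eq_square algebra_simps)
  next
    case 3
    define t where "t = s - 2"
    have t: "t < B m l" "0 < t" "even t \<longleftrightarrow> even l" using 3 sl s_def t_def by auto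
    have "2 * int m * int t - (int t)^2 < int l" by (rule B_minimal[OF t])
    moreover have "even (int l - (2 * int m * int t - (int t)^2))" using t(3) by simp
    then obtain k where k: "int l - (2 * int m * int t - (int t)^2) = 2 * k" ..
    ultimately have "0 < k" by linarith
    with k have "2 * int m * int t - (int t)^2 + 2 \<le> int l" by linarith
    moreover have "int s = int t + 2" using t_def 3 by simp
    ultimately show ?thesis using s_def by (simp add: power2_eq_square algebra_simps)
  qed
qed

lemma add_2_le_B:
  assumes m: "0 < m" and l: "1 \<le> l" "l \<le> m^2" and t: "t \<le> m" "even t \<longleftrightarrow> even l"
    and cap: "2 * int m * int t - (int t)^2 < int l"
  shows "t + 2 \<le> B m l"
proof -
  define s where "s = B m l"
  have "t < s"
  proof (rule ccontr)
    assume "\<not> t < s"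
    then have "0 \<le> (int t - int s) * (2 * int m - int s - int t)"
      using t by (intro mult_nonneg_nonneg) auto
    moreover have "int l \<le> 2 * int m * int s - (int s)^2" using B_spec(3)[OF m l] s_def by simp
    moreover have "(2 * int m * int t - (int t)^2) - (2 * int m * int s - (int s)^2)
        = (int t - int s) * (2 * int m - int s - int t)" by algebra
    ultimately show False using cap by linarith
  qed
  moreover have "even s \<longleftrightarrow> even t" using B_spec(2)[OF m l] t s_def by simp
  ultimately show ?thesis unfolding s_def by presburger
qed

lemma B_le_threshold_index:
  fixes j :: int
  assumes m: "0 < m" and l: "1 \<le> l" "l \<le> m^2"
    and thr: "int l < int m^2 + 2 - (int m + 1 - j)^2"
  shows "int (B m l) \<le> j - (if even l \<longleftrightarrow> even j then 0 else 1)"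
proof -
  define s where "s = int (B m l)"
  have sm: "s \<le> int m" and sl: "even s \<longleftrightarrow> even l" using B_spec[OF m l] s_def by auto
  have "int m^2 + 2 - (int m + 2 - s)^2 \<le> int l" using B_threshold_le[OF m l] s_def by simp
  have "s \<le> j"
  proof (rule ccontr)
    assume "\<not> s \<le> j"
    then have "(int m + 2 - s)^2 \<le> (int m + 1 - j)^2" using sm by (intro power_mono) auto
    with \<open>int m^2 + 2 - (int m + 2 - s)^2 \<le> int l\<close> thr show False by linarith
  qed
  moreover have "s \<noteq> j" if "\<not> (even l \<longleftrightarrow> even j)" using that sl by auto
  ultimately show ?thesis unfolding s_def by auto
qed

lemma even_sum_list_B_iff:
  assumes "\<forall>l\<in>set ls. even (B m l) \<longleftrightarrow> even l"
  shows "even (sum_list (map (B m) ls)) \<longleftrightarrow> even (sum_list ls)"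
  using assms by (induction ls) auto

lemma impossibly_burnable_sum_B_ge:
  assumes ib: "impossibly_burnable m ls" and pos: "\<forall>l\<in>set ls. 1 \<le> l"
  shows "m + 2 \<le> sum_list (map (B m) ls)"
proof -
  have m: "0 < m" and sum: "sum_list ls = m^2" and more: "m < sum_list (map (B m) ls)"
    using ib unfolding impossibly_burnable_def by auto
  have "\<forall>l\<in>set ls. even (B m l) \<longleftrightarrow> even l"
    using B_spec(2)[OF m] pos member_le_sum_list[of _ ls] sum by auto
  then have "even (sum_list (map (B m) ls)) \<longleftrightarrow> even m"
    using sum by (simp add: even_sum_list_B_iff)
  then have "sum_list (map (B m) ls) \<noteq> m + 1" by auto
  with more show ?thesis by linarith
qed

lemma threshold_index_exists:
  fixes m lam :: int
  assumes m: "2 \<le> m" and lam: "1 \<le> lam" "lam < m^2 - 2"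
  obtains j where "1 \<le> j" "j \<le> m - 1"
    "m^2 + 2 - (m + 2 - j)^2 \<le> lam" "lam < m^2 + 2 - (m + 1 - j)^2"
proof -
  define S where "S = {j. 1 \<le> j \<and> j \<le> m - 1 \<and> m^2 + 2 - (m + 2 - j)^2 \<le> lam}"
  have "finite S" unfolding S_def by (rule finite_subset[of _ "{1..m - 1}"]) auto
  moreover have "1 \<in> S" using m lam unfolding S_def by (simp add: power2_eq_square algebra_simps)
  ultimately have j: "Max S \<in> S" and above: "\<And>i. i \<in> S \<Longrightarrow> i \<le> Max S"
    by (auto intro: Max_in)
  show thesis
  proof (rule that)
    show "1 \<le> Max S" "Max S \<le> m - 1" "m^2 + 2 - (m + 2 - Max S)^2 \<le> lam"
      using j unfolding S_def by auto
    show "lam < m^2 + 2 - (m + 1 - Max S)^2"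
    proof (cases "Max S = m - 1")
      case True
      then show ?thesis using lam by simp
    next
      case False
      then have "Max S + 1 \<notin> S" using above by fastforce
      moreover have "1 \<le> Max S + 1" "Max S + 1 \<le> m - 1" using j False unfolding S_def by auto
      ultimately show ?thesis unfolding S_def by (simp add: algebra_simps)
    qed
  qed
qed

section \<open>Distributing the excess over the longer paths\<close>

lemma concave_excess_step:
  fixes H X Sq x :: int
  assumes inv: "\<forall>X0. 0 \<le> X0 \<and> X0 \<le> X \<longrightarrow> H*X0 - X0^2 \<le> H*X - Sq"
    and X0: "0 \<le> X" and x0: "0 \<le> x" and xH: "2*x \<le> H"
  shows "\<forall>X0. 0 \<le> X0 \<and> X0 \<le> X + x \<longrightarrow> H*X0 - X0^2 \<le> H*(X+x) - (Sq + x^2)"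
proof (intro allI impI)
  fix X0 assume h: "0 \<le> X0 \<and> X0 \<le> X + x"
  have hx: "0 \<le> x*(H - x)" using x0 xH by (intro mult_nonneg_nonneg) auto
  show "H*X0 - X0^2 \<le> H*(X+x) - (Sq + x^2)"
  proof (cases "X0 \<le> X")
    case True
    hence "H*X0 - X0^2 \<le> H*X - Sq" using inv h by auto
    then show ?thesis using hx by (simp add: algebra_simps power2_eq_square)
  next
    case False
    define y where "y = X0 - X"
    have y0: "0 < y" "y \<le> x" using False h y_def by auto
    have a: "H*X - X^2 \<le> H*X - Sq" using inv X0 by auto
    have b: "0 \<le> (x - y)*(H - x - y)" using y0 xH by (intro mult_nonneg_nonneg) auto
    have c: "0 \<le> X*y" using X0 y0 by simp
    have "H*X0 - X0^2 = (H*X - X^2) + (H*y - y^2) - 2*(X*y)" unfolding y_def by algebra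
    moreover have "(H*x - x^2) - (H*y - y^2) = (x - y)*(H - x - y)" by algebra
    ultimately show ?thesis using a b c by (simp add: algebra_simps power2_eq_square)
  qed
qed

text \<open>\<open>e\<close> counts the paths whose burning number \<open>s\<close> exceeds \<open>j\<close>; each of them contributes
  \<open>x = s - j - 1\<close> to \<open>X\<close> and \<open>x\<^sup>2\<close> to \<open>Sq\<close>, and has order at least \<open>lam + dl + H x - x\<^sup>2\<close>.
  As \<open>H X - Sq\<close> is the sum of the concave \<open>H x - x\<^sup>2\<close>, it dominates \<open>H y - y\<^sup>2\<close> on \<open>[0, X]\<close>.\<close>

lemma longer_paths_excess:
  fixes lam j dl H :: int
  assumes m: "0 < m" and xs: "\<forall>l\<in>set xs. 1 \<le> l \<and> l \<le> m^2 \<and> lam \<le> int l"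
    and dl_def: "dl = int m^2 + 2 - (int m + 1 - j)^2 - lam" and H_def: "H = 2 * (int m + 1 - j)"
  shows "\<exists>e X Sq. 0 \<le> e \<and> e \<le> int (length xs) \<and> 0 \<le> X \<and> (e = 0 \<longrightarrow> X = 0) \<and>
    (\<Sum>l\<leftarrow>xs. int (B m l)) \<le> int (length xs) * j + e + X \<and>
    int (length xs) * lam + e * dl + H * X - Sq \<le> (\<Sum>l\<leftarrow>xs. int l) \<and>
    (\<forall>X0. 0 \<le> X0 \<and> X0 \<le> X \<longrightarrow> H * X0 - X0^2 \<le> H * X - Sq)"
  using xs
proof (induction xs)
  case Nil
  show ?case by (intro exI[of _ 0]) auto
next
  case (Cons l xs)
  then obtain e X Sq where IH: "0 \<le> e" "e \<le> int (length xs)" "0 \<le> X" "e = 0 \<longrightarrow> X = 0"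
      "(\<Sum>l\<leftarrow>xs. int (B m l)) \<le> int (length xs) * j + e + X"
      "int (length xs) * lam + e * dl + H * X - Sq \<le> (\<Sum>l\<leftarrow>xs. int l)"
      "\<forall>X0. 0 \<le> X0 \<and> X0 \<le> X \<longrightarrow> H * X0 - X0^2 \<le> H * X - Sq" by auto
  have l: "1 \<le> l" "l \<le> m^2" "lam \<le> int l" using Cons.prems by auto
  define s where "s = int (B m l)"
  have "s \<le> int m" using B_spec(4)[OF m l(1,2)] s_def by simp
  have s_thr: "int m^2 + 2 - (int m + 2 - s)^2 \<le> int l" using B_threshold_le[OF m l(1,2)] s_def by simp
  show ?case
  proof (cases "s \<le> j")
    case True
    with IH l s_def show ?thesis by (intro exI[of _ e] exI[of _ X] exI[of _ Sq]) (auto simp: algebra_simps)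
  next
    case False
    define x where "x = s - j - 1"
    have x: "0 \<le> x" "2*x \<le> H" using False \<open>s \<le> int m\<close> x_def H_def by auto
    have "int m^2 + 2 - (int m + 2 - s)^2 = lam + dl + H * x - x^2"
      unfolding dl_def H_def x_def by algebra
    with IH(5,6) s_thr have sums: "(\<Sum>l\<leftarrow>l # xs. int (B m l)) \<le> int (length (l # xs)) * j + (e + 1) + (X + x)"
      "int (length (l # xs)) * lam + (e + 1) * dl + H * (X + x) - (Sq + x^2) \<le> (\<Sum>l\<leftarrow>l # xs. int l)"
      unfolding s_def x_def by (simp_all add: algebra_simps)
    have concave: "\<forall>X0. 0 \<le> X0 \<and> X0 \<le> X + x \<longrightarrow> H * X0 - X0^2 \<le> H * (X + x) - (Sq + x^2)"
      by (rule concave_excess_step[OF IH(7) IH(3) x])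
    show ?thesis
      by (intro exI[of _ "e + 1"] exI[of _ "X + x"] exI[of _ "Sq + x^2"] conjI)
        (use IH x sums concave in simp_all)
  qed
qed

lemma concave_quadratic_ge_min:
  fixes a b x d :: int
  assumes "a \<le> x" "x \<le> b"
  shows "min (d*a - a^2) (d*b - b^2) \<le> d*x - x^2"
proof (cases "a = b")
  case True
  with assms show ?thesis by simp
next
  case False
  define f where "f = (\<lambda>y::int. d*y - y^2)"
  define l where "l = min (f a) (f b)"
  have "(b - x) * l \<le> (b - x) * f a" "(x - a) * l \<le> (x - a) * f b"
    using assms unfolding l_def by (simp_all add: mult_left_mono)
  moreover have "(b - a) * f x = (b - x) * f a + (x - a) * f b + (b - a) * (x - a) * (b - x)"
    unfolding f_def by algebra
  moreover have "0 \<le> (b - a) * (x - a) * (b - x)" using assms by simp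
  ultimately have "(b - a) * l \<le> (b - a) * f x" by (simp add: algebra_simps)
  then show ?thesis using assms False unfolding f_def l_def by (simp add: mult_le_cancel_left)
qed

lemma excess_cases:
  fixes e X Sq R dl H Phi n :: int
  assumes e: "0 \<le> e" "e \<le> n - 1" and X: "0 \<le> X" "e = 0 \<longrightarrow> X = 0"
    and R: "R \<le> e + X" and Phi: "e*dl + H*X - Sq \<le> Phi" and dl: "1 \<le> dl"
    and concave: "\<forall>X0. 0 \<le> X0 \<and> X0 \<le> X \<longrightarrow> H*X0 - X0^2 \<le> H*X - Sq"
  shows "R \<le> 0 \<or> (1 \<le> R \<and> R \<le> n - 1 \<and> R*dl \<le> Phi) \<or> (1 \<le> R \<and> dl + (R - 1)*(H - R + 1) \<le> Phi)
    \<or> (n - 1 \<le> R \<and> (n - 1)*dl + (R - n + 1)*(H - R + n - 1) \<le> Phi)"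
proof (cases "R \<le> e")
  case True
  have "0 \<le> H*X - Sq" using concave X by (auto dest: spec[of _ 0])
  moreover have "R*dl \<le> e*dl" using True dl by (intro mult_right_mono) auto
  ultimately show ?thesis using True e Phi by auto
next
  case False
  \<comment> \<open>\<open>Q\<close> is concave, so on \<open>[1, min (n - 1) R]\<close> it is smallest at an endpoint.\<close>
  define Q where "Q = (\<lambda>x. x*dl + (R - x)*(H - R + x))"
  have Q: "Q x = R*(H - R) + ((dl + 2*R - H)*x - x^2)" for x unfolding Q_def by algebra
  have "1 \<le> e" using X R False e by auto
  have "H*(R - e) - (R - e)^2 \<le> H*X - Sq" using concave R False by auto
  then have "Q e \<le> Phi" using Phi unfolding Q_def by (simp add: algebra_simps power2_eq_square)
  moreover have "min (Q 1) (Q (min (n - 1) R)) \<le> Q e"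
  proof -
    have "min ((dl + 2*R - H)*1 - 1^2) ((dl + 2*R - H)*min (n - 1) R - (min (n - 1) R)^2)
        \<le> (dl + 2*R - H)*e - e^2"
      using \<open>1 \<le> e\<close> False e by (intro concave_quadratic_ge_min) auto
    then show ?thesis unfolding Q min_add_distrib_left by simp
  qed
  ultimately have "Q 1 \<le> Phi \<or> Q (min (n - 1) R) \<le> Phi" by linarith
  then show ?thesis
  proof
    assume "Q 1 \<le> Phi"
    then show ?thesis using False \<open>1 \<le> e\<close> unfolding Q_def by auto
  next
    assume Qb: "Q (min (n - 1) R) \<le> Phi"
    show ?thesis
    proof (cases "R \<le> n - 1")
      case True
      with Qb have "Q R \<le> Phi" by (simp add: min_absorb2)
      with True False \<open>1 \<le> e\<close> show ?thesis unfolding Q_def by simp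
    next
      case False
      with Qb have "Q (n - 1) \<le> Phi" by (simp add: min_absorb1)
      with False show ?thesis unfolding Q_def by (simp add: algebra_simps)
    qed
  qed
qed

text \<open>With \<open>R = m + 2 - n j + par\<close> the excess over \<open>j\<close> that the \<open>n - 1\<close> longer paths must carry
  (\<open>par = 1\<close> when \<open>lam\<close> and \<open>j\<close> differ in parity, so that the shortest path needs at most
  \<open>j - 1\<close> sources), the disjuncts say that one of the cheapest placements of this excess fits
  into the total order \<open>m\<^sup>2\<close>: no excess at all, one unit on each of \<open>R\<close> paths, everything on a
  single path, or an even spread over all longer paths.\<close>

definition excess_fits :: "int \<Rightarrow> int \<Rightarrow> int \<Rightarrow> int \<Rightarrow> int \<Rightarrow> bool" where
  "excess_fits n m lam j par \<longleftrightarrow>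
     m + 2 - n*j + par \<le> 0
   \<or> (1 \<le> m + 2 - n*j + par \<and> m + 2 - n*j + par \<le> n - 1 \<and>
       (n - (m + 2 - n*j + par)) * lam + (m + 2 - n*j + par) * (m^2 + 2 - (m + 1 - j)^2) \<le> m^2)
   \<or> (n - 1) * lam + 2 \<le> ((n - 1) * j - par)^2
   \<or> (n - 1 \<le> m + 2 - n*j + par \<and>
       lam + (n - 2) * (m^2 - (m + 1 - j)^2) + 2 * (n - 1) \<le> ((n - 1) * (j + 1) - 1 - par)^2)"

lemma excess_fits_if_excess_cases:
  fixes n m lam j par :: int
  defines "R \<equiv> m + 2 - n*j + par" and "dl \<equiv> m^2 + 2 - (m + 1 - j)^2 - lam"
    and "H \<equiv> 2 * (m + 1 - j)" and "Phi \<equiv> m^2 - n * lam"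
  assumes "R \<le> 0 \<or> (1 \<le> R \<and> R \<le> n - 1 \<and> R * dl \<le> Phi)
      \<or> (1 \<le> R \<and> dl + (R - 1) * (H - R + 1) \<le> Phi)
      \<or> (n - 1 \<le> R \<and> (n - 1) * dl + (R - n + 1) * (H - R + n - 1) \<le> Phi)"
  shows "excess_fits n m lam j par"
proof -
  have "R * dl - Phi = (n - R) * lam + R * (m^2 + 2 - (m + 1 - j)^2) - m^2"
    unfolding dl_def Phi_def by algebra
  moreover have "dl + (R - 1) * (H - R + 1) - Phi = (n - 1) * lam + 2 - ((n - 1) * j - par)^2"
    unfolding R_def dl_def H_def Phi_def by algebra
  moreover have "(n - 1) * dl + (R - n + 1) * (H - R + n - 1) - Phi
      = lam + (n - 2) * (m^2 - (m + 1 - j)^2) + 2 * (n - 1) - ((n - 1) * (j + 1) - 1 - par)^2"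
    unfolding R_def dl_def H_def Phi_def by algebra
  ultimately show ?thesis using assms(5) unfolding excess_fits_def R_def[symmetric] by linarith
qed

lemma excess_fits_forest:
  fixes j :: int
  assumes n: "3 \<le> n" and pf: "path_forest n (a # rest)" and ib: "impossibly_burnable m (a # rest)"
    and thr: "int a < int m^2 + 2 - (int m + 1 - j)^2"
  shows "excess_fits (int n) (int m) (int a) j (if even a \<longleftrightarrow> even j then 0 else 1)"
proof -
  define par :: int where "par = (if even a \<longleftrightarrow> even j then 0 else 1)"
  define dl where "dl = int m^2 + 2 - (int m + 1 - j)^2 - int a"
  define H where "H = 2 * (int m + 1 - j)"
  define Phi where "Phi = int m^2 - int n * int a"
  define R where "R = int m + 2 - int n * j + par"
  have m: "0 < m" and sum: "a + sum_list rest = m^2"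
    using ib unfolding impossibly_burnable_def by auto
  have len: "length rest = n - 1" and pos: "\<forall>l\<in>set (a # rest). 1 \<le> l"
    and above: "\<forall>l\<in>set rest. a \<le> l"
    using pf unfolding path_forest_def by auto
  have small: "\<forall>l\<in>set (a # rest). l \<le> m^2"
    using member_le_sum_list[of _ "a # rest"] sum by auto
  obtain e X Sq where e: "0 \<le> e" "e \<le> int (length rest)" and X: "0 \<le> X" "e = 0 \<longrightarrow> X = 0"
    and sum_B: "sum_list (map (\<lambda>l. int (B m l)) rest) \<le> int (length rest) * j + e + X"
    and sum_l: "int (length rest) * int a + e * dl + H * X - Sq \<le> sum_list (map int rest)"
    and concave: "\<forall>X0. 0 \<le> X0 \<and> X0 \<le> X \<longrightarrow> H * X0 - X0^2 \<le> H * X - Sq"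
    using longer_paths_excess[OF m _ dl_def H_def, of rest] pos small above by auto
  have "int (B m a) \<le> j - par"
    unfolding par_def using pos small thr by (intro B_le_threshold_index[OF m]) auto
  moreover have "int m + 2 \<le> int (B m a) + (\<Sum>l\<leftarrow>rest. int (B m l))"
  proof -
    have "int (m + 2) \<le> int (B m a + sum_list (map (B m) rest))"
      using impossibly_burnable_sum_B_ge[OF ib pos] by simp
    then show ?thesis by (simp flip: sum_list_of_nat add: comp_def)
  qed
  ultimately have "R \<le> e + X"
    using sum_B len n unfolding R_def by (simp add: algebra_simps)
  moreover have "e * dl + H * X - Sq \<le> Phi"
    using sum_l sum len n unfolding Phi_def
    by (simp add: sum_list_of_nat of_nat_diff algebra_simps flip: of_nat_add)
  moreover have "1 \<le> dl" using thr dl_def by simp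
  moreover have "e \<le> int n - 1" using e len n by simp
  ultimately have "R \<le> 0 \<or> (1 \<le> R \<and> R \<le> int n - 1 \<and> R * dl \<le> Phi)
      \<or> (1 \<le> R \<and> dl + (R - 1) * (H - R + 1) \<le> Phi)
      \<or> (int n - 1 \<le> R \<and> (int n - 1) * dl + (R - int n + 1) * (H - R + int n - 1) \<le> Phi)"
    using excess_cases e X concave by blast
  then show ?thesis unfolding par_def[symmetric] R_def dl_def H_def Phi_def
    by (rule excess_fits_if_excess_cases)
qed

section \<open>Case analysis on the threshold index\<close>

text \<open>\<open>le_bound_at n p k\<close> is \<open>k \<le> 12n - 6 - 3p - (6n - 4)/p\<close> without division.\<close>

definition le_bound_at :: "int \<Rightarrow> int \<Rightarrow> int \<Rightarrow> bool" where
  "le_bound_at n p k \<longleftrightarrow> p * k \<le> (12*n - 6 - 3*p) * p - (6*n - 4)"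

lemma le_9n_imp_ex_le_bound_at:
  fixes n k :: int
  assumes "k \<le> 9*n - 10"
  shows "\<exists>p\<ge>1. le_bound_at n p k"
  using assms unfolding le_bound_at_def by (intro exI[of _ 2]) simp

lemma excess_fits_index_2:
  fixes n m lam par :: int
  assumes n: "3 \<le> n" and lam: "lam \<le> 2*m" and par: "par = 0 \<or> par = 1"
    and fits: "excess_fits n m lam 2 par"
  shows "lam + 1 \<le> 9*n - 10"
  using fits unfolding excess_fits_def
proof (elim disjE)
  assume "m + 2 - n*2 + par \<le> 0"
  then show ?thesis using lam par n by linarith
next
  assume "1 \<le> m + 2 - n*2 + par \<and> m + 2 - n*2 + par \<le> n - 1 \<and>
    (n - (m + 2 - n*2 + par)) * lam + (m + 2 - n*2 + par) * (m^2 + 2 - (m + 1 - 2)^2) \<le> m^2"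
  then show ?thesis using lam par n by linarith
next
  assume h: "(n - 1) * lam + 2 \<le> ((n - 1) * 2 - par)^2"
  have "0 \<le> (n - 1) * 2 - par" using par n by auto
  then have "((n - 1) * 2 - par)^2 \<le> ((n - 1) * 2)^2"
    using par by (intro power_mono) auto
  then have "(n - 1) * lam < (n - 1) * (4*n - 4)" using h by (simp add: power2_eq_square algebra_simps)
  then have "lam < 4*n - 4" using n by (simp add: mult_less_cancel_left)
  then show ?thesis using n by linarith
next
  assume "n - 1 \<le> m + 2 - n*2 + par \<and>
    lam + (n - 2) * (m^2 - (m + 1 - 2)^2) + 2 * (n - 1) \<le> ((n - 1) * (2 + 1) - 1 - par)^2"
  moreover have "m^2 - (m + 1 - 2)^2 = 2*m - 1" by (simp add: power2_eq_square algebra_simps)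
  ultimately have h: "lam + (n - 2) * (2*m - 1) + 2 * (n - 1) \<le> ((n - 1) * 3 - 1 - par)^2"
    by simp
  have "0 \<le> (n - 1) * 3 - 1 - par" using par n by auto
  then have "((n - 1) * 3 - 1 - par)^2 \<le> ((n - 1) * 3 - 1)^2"
    using par by (intro power_mono) auto
  moreover have "(n - 2) * (lam - 1) \<le> (n - 2) * (2*m - 1)" using n lam by (intro mult_left_mono) auto
  ultimately have "(n - 1) * lam + n \<le> ((n - 1) * 3 - 1)^2" using h by (simp add: algebra_simps)
  then have "(n - 1) * lam < (n - 1) * (9*n - 15)" using n by (simp add: power2_eq_square algebra_simps)
  then have "lam < 9*n - 15" using n by (simp add: mult_less_cancel_left)
  then show ?thesis using n by linarith
qed

lemma spread_excess_index_3:
  fixes n m lam par p :: int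
  assumes n: "1 \<le> n" and par: "par = 0 \<or> par = 1" and p: "1 \<le> p" and m: "m = 4*n - 2 - p - par"
    and fit: "p * lam + (n - p) * (4*m - 2) \<le> m^2"
  shows "le_bound_at n p (lam + par)"
  using par
proof
  assume "par = 0"
  then have "m^2 - (n - p) * (4*m - 2) = (12*n - 6 - 3*p) * p - (6*n - 4)" using m by algebra
  then show ?thesis using fit \<open>par = 0\<close> by (simp add: le_bound_at_def)
next
  assume "par = 1"
  then have "m^2 - (n - p) * (4*m - 2) = (12*n - 6 - 3*p) * p - (6*n - 4) - (2*p + 4*n - 5)"
    using m by algebra
  then show ?thesis using fit \<open>par = 1\<close> p n by (simp add: le_bound_at_def algebra_simps)
qed

lemma excess_fits_index_3:
  fixes n m lam par :: int
  assumes n: "3 \<le> n" and lam: "2*m + 1 \<le> lam" "lam \<le> 4*m - 3" and nlam: "n * lam \<le> m^2"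
    and par: "par = 0 \<or> par = 1" and fits: "excess_fits n m lam 3 par"
  shows "\<exists>p\<ge>1. le_bound_at n p (lam + par)"
  using fits unfolding excess_fits_def
proof (elim disjE)
  assume h: "m + 2 - n*3 + par \<le> 0"
  have "0 \<le> m" using lam by linarith
  moreover have "m \<le> 3*n - 2" using h par by linarith
  ultimately have "m^2 \<le> (3*n - 2)^2" by (intro power_mono) auto
  then have "n * lam < n * (9*n - 10)" using nlam n by (simp add: power2_eq_square algebra_simps)
  then have "lam < 9*n - 10" using n by (simp add: mult_less_cancel_left)
  then show ?thesis using par by (intro le_9n_imp_ex_le_bound_at) auto
next
  define p where "p = 4*n - m - 2 - par"
  assume "1 \<le> m + 2 - n*3 + par \<and> m + 2 - n*3 + par \<le> n - 1 \<and>
    (n - (m + 2 - n*3 + par)) * lam + (m + 2 - n*3 + par) * (m^2 + 2 - (m + 1 - 3)^2) \<le> m^2"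
  then have p: "1 \<le> p" and "p * lam + (n - p) * (m^2 + 2 - (m - 2)^2) \<le> m^2"
    unfolding p_def by (auto simp: algebra_simps)
  moreover have "m^2 + 2 - (m - 2)^2 = 4*m - 2" by (simp add: power2_eq_square algebra_simps)
  ultimately have "p * lam + (n - p) * (4*m - 2) \<le> m^2" by simp
  then have "le_bound_at n p (lam + par)" using n par p unfolding p_def by (intro spread_excess_index_3) auto
  then show ?thesis using p by blast
next
  assume h: "(n - 1) * lam + 2 \<le> ((n - 1) * 3 - par)^2"
  have "lam + par \<le> 9*n - 10" using par
  proof
    assume "par = 0"
    then have "(n - 1) * lam < (n - 1) * (9*n - 9)" using h by (simp add: power2_eq_square algebra_simps)
    then show ?thesis using \<open>par = 0\<close> n by (simp add: mult_less_cancel_left)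
  next
    assume "par = 1"
    then have "(n - 1) * lam < (n - 1) * (9*n - 15)" using h by (simp add: power2_eq_square algebra_simps)
    then show ?thesis using \<open>par = 1\<close> n by (simp add: mult_less_cancel_left)
  qed
  then show ?thesis by (rule le_9n_imp_ex_le_bound_at)
next
  assume a: "n - 1 \<le> m + 2 - n*3 + par \<and>
    lam + (n - 2) * (m^2 - (m + 1 - 3)^2) + 2 * (n - 1) \<le> ((n - 1) * (3 + 1) - 1 - par)^2"
  have "m^2 - (m + 1 - 3)^2 = 4*m - 4" by (simp add: power2_eq_square algebra_simps)
  with a have h: "4*n - 3 - par \<le> m"
    "lam + (n - 2) * (4*m - 4) + 2 * (n - 1) \<le> ((n - 1) * 4 - 1 - par)^2"
    by auto
  have False using par
  proof
    assume "par = 0"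
    then have "(n - 2) * (16*n - 16) \<le> (n - 2) * (4*m - 4)" using h n by (intro mult_left_mono) auto
    then show False using h \<open>par = 0\<close> lam n by (simp add: power2_eq_square algebra_simps)
  next
    assume "par = 1"
    then have "(n - 2) * (16*n - 20) \<le> (n - 2) * (4*m - 4)" using h n by (intro mult_left_mono) auto
    then show False using h \<open>par = 1\<close> lam n by (simp add: power2_eq_square algebra_simps)
  qed
  then show ?thesis ..
qed

lemma paths_fit_index_bound:
  fixes n m t :: int
  assumes n: "1 \<le> n" and t: "t < m" and fit: "n * (m^2 + 2 - (m - t)^2) \<le> m^2"
  shows "(2*n - 1) * t \<le> m"
proof (rule ccontr)
  assume "\<not> (2*n - 1) * t \<le> m"
  then have "0 < (n - 1)*t - (m - n*t)" by (simp add: algebra_simps)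
  moreover have "0 < (n - 1)*t + (m - n*t)" using t by (simp add: algebra_simps)
  ultimately have "0 < ((n - 1)*t - (m - n*t)) * ((n - 1)*t + (m - n*t))" by (rule mult_pos_pos)
  moreover have "0 \<le> (n - 1) * t^2" using n by simp
  moreover have "m^2 - n * (m^2 + 2 - (m - t)^2)
      = - ((n - 1) * t^2) - 2*n - ((n - 1)*t - (m - n*t)) * ((n - 1)*t + (m - n*t))"
    by algebra
  ultimately show False using fit n by linarith
qed

lemma no_spread_excess_index_ge_4:
  fixes n m lam t par R :: int
  assumes n: "3 \<le> n" and t: "2 \<le> t" and tm: "(2*n - 1) * t \<le> m"
    and lam: "m^2 + 2 - (m - t)^2 \<le> lam" and par: "par = 0 \<or> par = 1"
    and R: "R = m + 2 - n*(t + 2) + par" "1 \<le> R" "R \<le> n - 1"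
    and fit: "(n - R) * lam + R * (m^2 + 2 - (m - 1 - t)^2) \<le> m^2"
  shows False
proof -
  have "(2*n - 1)*t \<le> n*(t + 3) - 3" using R tm par by (auto simp: algebra_simps)
  then have "(n - 1)*(t - 3) \<le> 0" by (simp add: algebra_simps)
  then have t3: "t \<le> 3" using n by (simp add: mult_le_0_iff)
  have "(n - R) * (m^2 + 2 - (m - t)^2) \<le> (n - R) * lam" using lam R by (intro mult_left_mono) auto
  then have B: "n * (m^2 + 2 - (m - t)^2) + R * ((m^2 + 2 - (m - 1 - t)^2) - (m^2 + 2 - (m - t)^2)) \<le> m^2"
    using fit by (simp add: algebra_simps)
  show False
  proof (cases "t = 2")
    case True
    define a where "a = m - 4*n"
    have "m = 4*n + a" unfolding a_def by simp
    then have "m^2 = 4*n*m + m*a" by algebra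
    moreover have "-2 \<le> a" using tm True a_def by simp
    then have "-2*(m - 5) \<le> a*(m - 5)" using tm True n by (intro mult_right_mono) auto
    moreover have "(a + 2)*(2*m - 5) \<le> R*(2*m - 5)" using R True a_def par tm n by (intro mult_right_mono) auto
    moreover have "n*(4*m - 2) + R*(2*m - 5) \<le> m^2" using B True by (simp add: power2_eq_square algebra_simps)
    ultimately show False using tm True n by (simp add: algebra_simps)
  next
    case False
    with t t3 have t3: "t = 3" by simp
    then have m: "m = 6*n - 3" using tm R par by auto
    have "1*(2*m - 7) \<le> R*(2*m - 7)" using R m n by (intro mult_right_mono) auto
    then show False using B t3 m n by (simp add: power2_eq_square algebra_simps)
  qed
qed

lemma no_single_excess_index_ge_4:
  fixes n m lam t par :: int
  assumes n: "3 \<le> n" and t: "2 \<le> t" and tm: "(2*n - 1) * t \<le> m"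
    and lam: "m^2 + 2 - (m - t)^2 \<le> lam" and par: "par = 0 \<or> par = 1"
    and fit: "(n - 1) * lam + 2 \<le> ((n - 1) * (t + 2) - par)^2"
  shows False
proof -
  have "(2*n - 1)*t*t \<le> m*t" using tm t by (intro mult_right_mono) auto
  then have "(4*n - 3) * t^2 + 2 \<le> lam" using lam by (simp add: power2_eq_square algebra_simps)
  then have A: "(n - 1) * ((4*n - 3) * t^2 + 2) \<le> (n - 1) * lam" using n by (intro mult_left_mono) auto
  have "(n - 1)*(t + 2) \<le> (n - 1)*(2*t)" using t n by (intro mult_left_mono) auto
  moreover have "2*4 \<le> (n - 1)*(t + 2)" using n t by (intro mult_mono) auto
  ultimately have "((n - 1)*(t + 2) - par)^2 \<le> ((n - 1)*(2*t))^2" using par by (intro power_mono) auto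
  moreover have "((n - 1)*(2*t))^2 - (n - 1) * ((4*n - 3) * t^2 + 2) - 2 = - ((n - 1) * t^2) - 2*n"
    by algebra
  moreover have "0 \<le> (n - 1) * t^2" using n by simp
  ultimately show False using fit A n by linarith
qed

lemma no_uniform_excess_index_ge_4:
  fixes n m lam t par :: int
  assumes n: "3 \<le> n" and t: "2 \<le> t"
    and lam: "m^2 + 2 - (m - t)^2 \<le> lam" and par: "par = 0 \<or> par = 1"
    and R: "n - 1 \<le> m + 2 - n*(t + 2) + par"
    and fit: "lam + (n - 2) * (m^2 - (m - 1 - t)^2) + 2 * (n - 1) \<le> ((n - 1) * (t + 3) - 1 - par)^2"
  shows False
proof -
  define d where "d = m - (n*(t + 3) - 4)"
  define W where "W = ((n - 1) * (t + 3) - 1)^2"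
  have "0 \<le> d" using R par d_def by (auto simp: algebra_simps)
  then have "0 \<le> d * (2*t + 2*(n - 2)*(t + 1))" using t n by (intro mult_nonneg_nonneg) auto
  moreover have "0 < (n - 1) * (n*(t - 2)^2 + (6*n - 4)*(t - 2) + 5*n - 6)"
  proof -
    have "0 \<le> n*(t - 2)^2" "0 \<le> (6*n - 4)*(t - 2)" using n t by simp_all
    then show ?thesis using n by (intro mult_pos_pos) linarith+
  qed
  moreover have "(m^2 + 2 - (m - t)^2) + (n - 2) * (m^2 - (m - 1 - t)^2) + 2*n - 2 - W
      = d * (2*t + 2*(n - 2)*(t + 1)) + ((n - 1) * (n*(t - 2)^2 + (6*n - 4)*(t - 2) + 5*n - 6) + 4)"
    unfolding d_def W_def by algebra
  ultimately have "W < (m^2 + 2 - (m - t)^2) + (n - 2) * (m^2 - (m - 1 - t)^2) + 2 * (n - 1)"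
    by (smt (verit))
  also have "\<dots> \<le> ((n - 1) * (t + 3) - 1 - par)^2" using fit lam by linarith
  also have "\<dots> \<le> W" unfolding W_def
  proof (rule power_mono)
    have "1*5 \<le> (n - 1)*(t + 3)" using n t by (intro mult_mono) auto
    then show "0 \<le> (n - 1) * (t + 3) - 1 - par" using par by auto
  qed (use par in auto)
  finally show False by simp
qed

lemma not_excess_fits_index_ge_4:
  fixes n m lam j par :: int
  assumes n: "3 \<le> n" and j: "4 \<le> j" "j \<le> m - 1" and nlam: "n * lam \<le> m^2"
    and lam: "m^2 + 2 - (m + 2 - j)^2 \<le> lam" and par: "par = 0 \<or> par = 1"
  shows "\<not> excess_fits n m lam j par"
proof
  define t where "t = j - 2"
  have jt: "j = t + 2" and t: "2 \<le> t" using j t_def by auto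
  have shift: "m + 1 - (t + 2) = m - 1 - t" "t + 2 + 1 = t + 3" by simp_all
  have lam_t: "m^2 + 2 - (m - t)^2 \<le> lam" using lam jt by (simp add: algebra_simps)
  then have "n * (m^2 + 2 - (m - t)^2) \<le> n * lam" using n by (intro mult_left_mono) auto
  also note nlam
  finally have tm: "(2*n - 1) * t \<le> m"
    by (rule paths_fit_index_bound[rotated 2]) (use n j t_def in auto)
  assume "excess_fits n m lam j par"
  then show False unfolding excess_fits_def jt shift
  proof (elim disjE conjE)
    assume h: "m + 2 - n*(t + 2) + par \<le> 0"
    then have "(2*n - 1)*t \<le> n*(t + 2) - 2" using tm par by linarith
    then have "(n - 1)*(t - 2) \<le> 0" by (simp add: algebra_simps)
    then have "t = 2" using n t by (simp add: mult_le_0_iff)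
    moreover from this have "m = 4*n - 2" using tm h par by (simp add: algebra_simps)
    ultimately have "n * ((4*n - 2)^2 + 2 - (4*n - 2 - 2)^2) \<le> (4*n - 2)^2"
      using nlam lam_t n by (smt (verit) mult_left_mono)
    then show False using n by (simp add: power2_eq_square algebra_simps)
  qed (auto intro: no_spread_excess_index_ge_4[OF n t tm lam_t par]
      no_single_excess_index_ge_4[OF n t tm lam_t par] no_uniform_excess_index_ge_4[OF n t lam_t par])
qed

lemma excess_fits_imp_le_bound_at:
  fixes n m lam j par k :: int
  assumes n: "3 \<le> n" and lam: "1 \<le> lam" and nlam: "n * lam \<le> m^2"
    and j: "1 \<le> j" "j \<le> m - 1"
    and thr: "m^2 + 2 - (m + 2 - j)^2 \<le> lam" "lam < m^2 + 2 - (m + 1 - j)^2"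
    and par: "par = (if even lam \<longleftrightarrow> even j then 0 else 1)"
    and fits: "excess_fits n m lam j par"
    and k: "odd k" "lam \<le> k" "k \<le> lam + 1"
  shows "\<exists>p\<ge>1. le_bound_at n p k"
proof -
  have par01: "par = 0 \<or> par = 1" using par by simp
  consider "j = 1" | "j = 2" | "j = 3" | "4 \<le> j" using j by linarith
  then show ?thesis
  proof cases
    case 1
    then have "lam = 1" using thr lam by (simp add: power2_eq_square algebra_simps)
    then have "k \<le> 9*n - 10" using k n by presburger
    then show ?thesis by (rule le_9n_imp_ex_le_bound_at)
  next
    case 2
    then have "lam \<le> 2*m" using thr by (simp add: power2_eq_square algebra_simps)
    with 2 have "lam + 1 \<le> 9*n - 10" using n par01 fits by (intro excess_fits_index_2) auto
    then show ?thesis using k by (intro le_9n_imp_ex_le_bound_at) simp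
  next
    case 3
    then have "2*m + 1 \<le> lam" "lam \<le> 4*m - 3" using thr by (simp_all add: power2_eq_square algebra_simps)
    with 3 have "\<exists>p\<ge>1. le_bound_at n p (lam + par)"
      using n nlam par01 fits by (intro excess_fits_index_3) auto
    moreover have "k = lam + par" using k par 3 by presburger
    ultimately show ?thesis by simp
  next
    case 4
    with not_excess_fits_index_ge_4[OF n 4 j(2) nlam thr(1) par01] fits show ?thesis by simp
  qed
qed

section \<open>The upper bound\<close>

lemma le_bound_iff:
  fixes n k :: int
  assumes n: "1 \<le> n"
  shows "real_of_int k \<le> 12 * real_of_int n - 2 * sqrt (18 * real_of_int n - 12) - 6 \<longleftrightarrow>
    0 \<le> 12*n - 6 - k \<and> 12 * (6*n - 4) \<le> (12*n - 6 - k)^2"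
proof -
  define D where "D = 12*n - 6 - k"
  have "real_of_int (12 * (6*n - 4)) = 2^2 * (18 * real_of_int n - 12)" by simp
  then have "2 * sqrt (18 * real_of_int n - 12) = sqrt (real_of_int (12 * (6*n - 4)))"
    by (simp only: real_sqrt_mult real_sqrt_abs)
  then have "real_of_int k \<le> 12 * real_of_int n - 2 * sqrt (18 * real_of_int n - 12) - 6 \<longleftrightarrow>
      sqrt (real_of_int (12 * (6*n - 4))) \<le> real_of_int D"
    unfolding D_def by auto
  also have "\<dots> \<longleftrightarrow> 0 \<le> real_of_int D \<and> real_of_int (12 * (6*n - 4)) \<le> (real_of_int D)^2"
  proof
    assume h: "sqrt (real_of_int (12 * (6*n - 4))) \<le> real_of_int D"
    have "0 \<le> sqrt (real_of_int (12 * (6*n - 4)))" using n by simp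
    with h sqrt_le_D[OF h] show "0 \<le> real_of_int D \<and> real_of_int (12 * (6*n - 4)) \<le> (real_of_int D)^2"
      by linarith
  qed (auto intro: real_le_lsqrt)
  also have "\<dots> \<longleftrightarrow> 0 \<le> D \<and> 12 * (6*n - 4) \<le> D^2"
    by (metis of_int_0_le_iff of_int_le_iff of_int_power)
  finally show ?thesis unfolding D_def .
qed

lemma Greatest_odd_le:
  fixes x :: real
  defines "G \<equiv> GREATEST k::int. odd k \<and> real_of_int k \<le> x"
  shows "odd G" "real_of_int G \<le> x" "x < real_of_int G + 2"
    and "\<And>k. odd k \<Longrightarrow> real_of_int k \<le> x \<Longrightarrow> k \<le> G"
proof -
  define g where "g = (if odd \<lfloor>x\<rfloor> then \<lfloor>x\<rfloor> else \<lfloor>x\<rfloor> - 1)"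
  have g: "odd g" "g \<le> \<lfloor>x\<rfloor>" "\<lfloor>x\<rfloor> \<le> g + 1" unfolding g_def by auto
  have max: "k \<le> g" if "odd k" "real_of_int k \<le> x" for k
  proof -
    have "k \<le> \<lfloor>x\<rfloor>" using that(2) by (simp add: le_floor_iff)
    with that(1) show ?thesis unfolding g_def by presburger
  qed
  have "G = g" unfolding G_def
    by (rule Greatest_equality) (use g max in \<open>auto simp: le_floor_iff\<close>)
  then show "odd G" "real_of_int G \<le> x" "\<And>k. odd k \<Longrightarrow> real_of_int k \<le> x \<Longrightarrow> k \<le> G"
    using g max by (auto simp: le_floor_iff)
  have "x < real_of_int \<lfloor>x\<rfloor> + 1" by linarith
  with \<open>G = g\<close> g(3) show "x < real_of_int G + 2" by linarith
qed

lemma le_bound_at_imp_le_bound: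
  fixes n p k :: int
  assumes n: "1 \<le> n" and p: "1 \<le> p" and k: "le_bound_at n p k"
  shows "real_of_int k \<le> 12 * real_of_int n - 2 * sqrt (18 * real_of_int n - 12) - 6"
proof -
  define D where "D = 12*n - 6 - k"
  define c where "c = 6*n - 4"
  have c: "0 < c" using n c_def by simp
  have pD: "3*p^2 + c \<le> p * D"
    using k unfolding le_bound_at_def D_def c_def by (simp add: algebra_simps power2_eq_square)
  have "0 < D"
  proof (rule ccontr)
    assume "\<not> 0 < D"
    then have "p * D \<le> 0" using p by (simp add: mult_nonneg_nonpos)
    with pD c show False by (smt (verit) zero_le_power2)
  qed
  have "12 * c * p^2 \<le> (3*p^2 + c)^2"
  proof -
    have "(3*p^2 + c)^2 - 12 * c * p^2 = (3*p^2 - c)^2" by algebra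
    then show ?thesis by (smt (verit) zero_le_power2)
  qed
  also have "\<dots> \<le> (p * D)^2" using pD c by (intro power_mono) auto
  finally have "p^2 * (12 * c) \<le> p^2 * D^2" by (simp add: power_mult_distrib algebra_simps)
  then have "12 * c \<le> D^2" using p by (simp add: mult_le_cancel_left)
  with \<open>0 < D\<close> show ?thesis using n unfolding le_bound_iff[OF n] D_def c_def by simp
qed

lemma shortest_path_le_bound:
  assumes n: "3 \<le> n" and pf: "path_forest n ls" and ib: "impossibly_burnable m ls"
  obtains k :: int where "odd k" "int (hd ls) \<le> k"
    "real_of_int k \<le> 12 * real n - 2 * sqrt (18 * real n - 12) - 6"
proof -
  obtain a rest where ls: "ls = a # rest" using pf n unfolding path_forest_def by (cases ls) auto
  have a: "1 \<le> a" and above: "\<forall>l\<in>set ls. a \<le> l" and len: "length ls = n"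
    using pf unfolding path_forest_def ls by auto
  have sum: "sum_list ls = m^2" using ib unfolding impossibly_burnable_def by simp
  have "(\<Sum>l\<leftarrow>ls. a) \<le> (\<Sum>l\<leftarrow>ls. l)" by (rule sum_list_mono) (use above in auto)
  then have "n * a \<le> m^2" using sum len by (simp add: sum_list_triv)
  then have nlam: "int n * int a \<le> int m^2" by (metis of_nat_le_iff of_nat_mult of_nat_power)
  have "3 * int a \<le> int n * int a" using n by (intro mult_right_mono) auto
  with nlam a have three: "3 \<le> int m^2" by linarith
  have m: "2 \<le> int m"
  proof (rule ccontr)
    assume "\<not> 2 \<le> int m"
    then have "int m^2 \<le> 1^2" by (intro power_mono) auto
    with three show False by simp
  qed
  then have "2^2 \<le> int m^2" by (intro power_mono) auto
  then have "4 \<le> int m^2" by simp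
  with three nlam \<open>3 * int a \<le> int n * int a\<close> have lam: "int a < int m^2 - 2" by linarith
  obtain j where j: "1 \<le> j" "j \<le> int m - 1"
    and thr: "int m^2 + 2 - (int m + 2 - j)^2 \<le> int a" "int a < int m^2 + 2 - (int m + 1 - j)^2"
    using threshold_index_exists[OF m _ lam] a by auto
  have fits: "excess_fits (int n) (int m) (int a) j (if even a \<longleftrightarrow> even j then 0 else 1)"
    using excess_fits_forest[OF n pf[unfolded ls] ib[unfolded ls] thr(2)] .
  define k where "k = int a + (if even a then 1 else 0)"
  have "odd k" "int a \<le> k" "k \<le> int a + 1" unfolding k_def by auto
  then obtain p where "1 \<le> p" "le_bound_at (int n) p k"
    using excess_fits_imp_le_bound_at[OF _ _ nlam j thr _ fits] n a by auto
  then have "real_of_int k \<le> 12 * real n - 2 * sqrt (18 * real n - 12) - 6"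
    using le_bound_at_imp_le_bound[of "int n" p k] n by simp
  with \<open>odd k\<close> \<open>int a \<le> k\<close> show thesis using ls by (intro that) auto
qed

section \<open>Extremal forests\<close>

text \<open>Paths of order \<open>k\<close>, \<open>L\<close> and \<open>4m - 2\<close> need 3, 3 and 4 sources, so the forest below needs
  \<open>4n - p = m + 2\<close> of them; \<open>p \<approx> sqrt ((6n - 4)/3)\<close> nearly maximises \<open>12n - 6 - 3p - (6n - 4)/p\<close>.\<close>

lemma extremal_forest_parameters:
  fixes n D :: int
  assumes n: "3 \<le> n" and D: "odd D" "0 \<le> D" "12 * (6*n - 4) \<le> D^2"
    and D_min: "\<not> (0 \<le> D - 2 \<and> 12 * (6*n - 4) \<le> (D - 2)^2)"
  defines "k \<equiv> 12*n - 6 - D" and "p \<equiv> (D + 1) div 6"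
  defines "m \<equiv> 4*n - 2 - p"
  defines "L \<equiv> (12*n - 6 - 3*p) * p - (6*n - 4) - (p - 1) * k"
  shows "2 \<le> p" "p \<le> n - 1" "odd L" "2*m + 1 \<le> k" "k \<le> L" "L \<le> 4*m - 2"
    "(p - 1) * k + L + (n - p) * (4*m - 2) = m^2"
proof -
  define r where "r = (D + 1) mod 6"
  have Dpr: "D + 1 = 6*p + r" unfolding p_def r_def by simp
  have "0 \<le> r" "r < 6" unfolding r_def by auto
  moreover have "even r" using Dpr D(1) by presburger
  ultimately have r: "r = 0 \<or> r = 2 \<or> r = 4" by presburger
  have "13 \<le> D"
  proof (rule ccontr)
    assume "\<not> 13 \<le> D"
    then have "D^2 \<le> 12^2" using D by (intro power_mono) auto
    then show False using D n by simp
  qed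
  then show p2: "2 \<le> p" using Dpr r by linarith
  from \<open>13 \<le> D\<close> D_min have D2: "(D - 2)^2 < 12 * (6*n - 4)" by simp
  have Dn: "D \<le> 6*n - 5"
  proof (rule ccontr)
    assume "\<not> D \<le> 6*n - 5"
    with D(1) have "6*n - 5 \<le> D - 2" by presburger
    then have "(6*n - 5)^2 \<le> (D - 2)^2" using n by (intro power_mono) auto
    moreover have "(6*n - 5)^2 - 12 * (6*n - 4) = (n - 3) * (36*n - 24) + 1" by algebra
    moreover have "0 \<le> (n - 3) * (36*n - 24)" using n by simp
    ultimately show False using D2 by linarith
  qed
  then show pn: "p \<le> n - 1" using Dpr r by linarith
  show "odd L" using D(1) unfolding L_def k_def by (auto simp: even_mult_iff)
  show "2*m + 1 \<le> k" using Dpr r Dn unfolding k_def m_def by presburger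
  have "12 * (L - k) = D^2 - (r - 1)^2 - 12 * (6*n - 4)"
    using Dpr unfolding L_def k_def by algebra
  moreover have "(r - 1)^2 \<le> 9" using r by auto
  ultimately have "-9 \<le> 12 * (L - k)" using D by linarith
  then show "k \<le> L" by presburger
  have "12 * (L - (4*m - 2)) = (D - 2)^2 - (r - 3)^2 - 120*n + 108 - 12*r"
    using Dpr unfolding L_def k_def m_def by algebra
  then show "L \<le> 4*m - 2" using D2 n \<open>0 \<le> r\<close> by (smt (verit) zero_le_power2)
  show "(p - 1) * k + L + (n - p) * (4*m - 2) = m^2" unfolding L_def m_def by algebra
qed

lemma stepped_forest_impossibly_burnable:
  fixes n p m k L :: nat
  assumes p: "2 \<le> p" "p < n" and m: "m + 2 = 4*n - p"
    and k: "odd k" "2*m + 1 \<le> k" and L: "odd L" "k \<le> L" "L \<le> 4*m - 2"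
    and sum: "(p - 1) * k + L + (n - p) * (4*m - 2) = m^2"
  defines "ls \<equiv> replicate (p - 1) k @ L # replicate (n - p) (4*m - 2)"
  shows "path_forest n ls" "impossibly_burnable m ls" "hd ls = k"
proof -
  define q where "q = 4*m - 2"
  have "sum_list ls = m^2" using sum unfolding ls_def by (simp add: sum_list_replicate)
  then have small: "k \<le> m^2" "L \<le> m^2" "q \<le> m^2"
    using member_le_sum_list[of _ ls] p unfolding ls_def q_def by auto
  show "path_forest n ls" using p k L unfolding path_forest_def ls_def by (auto simp: sorted_append)
  have "2 \<le> m" using m p by linarith
  note facts = small this k L
  have "1 + 2 \<le> B m k" by (rule add_2_le_B) (use facts in simp_all)
  moreover have "1 + 2 \<le> B m L" by (rule add_2_le_B) (use facts in simp_all)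
  moreover have "2 + 2 \<le> B m q" by (rule add_2_le_B) (use facts q_def in simp_all)
  ultimately have "(p - 1) * 3 + (3 + (n - p) * 4) \<le> sum_list (map (B m) ls)"
    unfolding ls_def q_def by (simp add: sum_list_replicate add_mono)
  then show "impossibly_burnable m ls"
    using m p \<open>sum_list ls = m^2\<close> \<open>2 \<le> m\<close> unfolding impossibly_burnable_def by simp
  show "hd ls = k" using p unfolding ls_def by (cases "p - 1") auto
qed

lemma extremal_forest_exists:
  fixes n :: nat and D :: int
  assumes n: "3 \<le> n" and D: "odd D" "0 \<le> D" "12 * (6 * int n - 4) \<le> D^2"
    "\<not> (0 \<le> D - 2 \<and> 12 * (6 * int n - 4) \<le> (D - 2)^2)"
  obtains m ls where "path_forest n ls" "impossibly_burnable m ls" "int (hd ls) = 12 * int n - 6 - D"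
proof -
  define k p where "k = 12 * int n - 6 - D" and "p = (D + 1) div 6"
  define m L where "m = 4 * int n - 2 - p"
    and "L = (12 * int n - 6 - 3*p) * p - (6 * int n - 4) - (p - 1) * k"
  note P = extremal_forest_parameters[of "int n", OF _ D, folded k_def p_def, folded m_def,
      folded L_def]
  from n have P: "2 \<le> p" "p \<le> int n - 1" "odd L" "2*m + 1 \<le> k" "k \<le> L" "L \<le> 4*m - 2"
    "(p - 1) * k + L + (int n - p) * (4*m - 2) = m^2"
    using P by auto
  have "0 \<le> p" "0 \<le> m" "0 \<le> k" "0 \<le> L" using P unfolding m_def by auto
  then obtain p' m' k' L' :: nat where nat: "p = int p'" "m = int m'" "k = int k'" "L = int L'"
    by (metis nonneg_int_cases)
  have "1 \<le> m'" using P(2) nat(1,2) n unfolding m_def by linarith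
  then have "int ((p' - 1) * k' + L' + (n - p') * (4*m' - 2)) = int (m'^2)"
    using P(1,2,7) nat by (simp add: of_nat_diff)
  then have sum: "(p' - 1) * k' + L' + (n - p') * (4*m' - 2) = m'^2" by (simp only: of_nat_eq_iff)
  have "odd k" using D(1) unfolding k_def by simp
  then have "2 \<le> p'" "p' < n" "m' + 2 = 4*n - p'" "odd k'" "2*m' + 1 \<le> k'"
    "odd L'" "k' \<le> L'" "L' \<le> 4*m' - 2"
    using P nat unfolding m_def by auto
  note forest = stepped_forest_impossibly_burnable[OF this sum]
  show thesis using that[OF forest(1,2)] forest(3) nat(3) unfolding k_def by simp
qed

lemma extremal_forest_at_bound:
  fixes n :: nat and k :: int
  defines "x \<equiv> 12 * real n - 2 * sqrt (18 * real n - 12) - 6"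
  assumes n: "3 \<le> n" and k: "odd k" "real_of_int k \<le> x" "x < real_of_int k + 2"
  obtains m ls where "path_forest n ls" "impossibly_burnable m ls" "int (hd ls) = k"
proof (rule extremal_forest_exists[OF n, of "12 * int n - 6 - k"])
  have le_x_iff: "real_of_int k' \<le> x \<longleftrightarrow>
      0 \<le> 12 * int n - 6 - k' \<and> 12 * (6 * int n - 4) \<le> (12 * int n - 6 - k')^2" for k'
    using le_bound_iff[of "int n" k'] n unfolding x_def by simp
  show "odd (12 * int n - 6 - k)" using k(1) by simp
  show "0 \<le> 12 * int n - 6 - k" "12 * (6 * int n - 4) \<le> (12 * int n - 6 - k)^2"
    using k(2) le_x_iff by auto
  have "\<not> real_of_int (k + 2) \<le> x" using k(3) by simp
  then show "\<not> (0 \<le> 12 * int n - 6 - k - 2 \<and> 12 * (6 * int n - 4) \<le> (12 * int n - 6 - k - 2)^2)"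
    unfolding le_x_iff by (simp add: algebra_simps)
qed (use that in simp)

theorem theorem2:
  fixes n :: nat
  assumes "3 \<le> n"
  shows "int (M n) = (GREATEST k::int. odd k \<and>
           real_of_int k \<le> 12 * real n - 2 * sqrt (18 * real n - 12) - 6)"
proof -
  define x where "x = 12 * real n - 2 * sqrt (18 * real n - 12) - 6"
  define G where "G = (GREATEST k::int. odd k \<and> real_of_int k \<le> x)"
  note G = Greatest_odd_le[where x=x, folded G_def]
  have upper: "hd ls \<le> nat G" if forest: "path_forest n ls" "impossibly_burnable m ls" for m ls
  proof -
    obtain k where "odd k" "int (hd ls) \<le> k" "real_of_int k \<le> x"
      using shortest_path_le_bound[OF assms forest] unfolding x_def .
    with G(4) show ?thesis by fastforce
  qed
  obtain m ls where extremal: "path_forest n ls" "impossibly_burnable m ls" "int (hd ls) = G"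
    using extremal_forest_at_bound[OF assms G(1-3)[unfolded x_def]] unfolding x_def .
  have "ls \<noteq> []" "\<forall>l\<in>set ls. 1 \<le> l" using extremal(1) assms unfolding path_forest_def by auto
  then have "0 < hd ls" using hd_in_set[of ls] by fastforce
  have "M n = nat G" unfolding M_def
  proof (rule Least_equality)
    show "0 < nat G \<and> (\<forall>m ls. path_forest n ls \<and> impossibly_burnable m ls \<longrightarrow> hd ls \<le> nat G)"
      using upper \<open>0 < hd ls\<close> extremal(3) by auto
    show "nat G \<le> b" if "0 < b \<and> (\<forall>m ls. path_forest n ls \<and> impossibly_burnable m ls \<longrightarrow> hd ls \<le> b)" for b
      using that extremal by fastforce
  qed
  then show ?thesis using extremal(3) unfolding G_def x_def by simp
qed

end
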